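(* Let $P_n$ be a labeled path with ad-pattern $w=w_1\cdots w_{n-1}$. Suppose that at least one of the following holds: (i) $RT(P_n)$ contains a $(1,1,3)$ sub-ribbon, i.e. $w$ contains $ddaa$ as a factor (consecutive letters); (ii) $RT(P_n)$ begins with a $(1,3)$ sub-ribbon, i.e. $w$ begins with $daa$; (iii) $RT(P_n)$ ends with a $(1,1,2)$ sub-ribbon, i.e. $w$ ends with $dda$. Then $X(P_n;\mathbf{x},q)$ is not symmetric.
   Context: A labeled path $P_n$ is the path graph with vertices $v_1,\dots,v_n$ (edges $v_iv_{i+1}$) where $v_i$ carries label $\sigma_i$ for a permutation $\sigma$ of $[n]$; vertices are identified with labels. A proper coloring is $c\colon[n]\to\{1,2,\dots\}$ with adjacent vertices colored differently; $\operatorname{asc}(c)=\#\{ij\in E: i<j,\ c(i)<c(j)\}$. The CQF is $X(P_n;\mathbf{x},q)=\sum_{c \text{ proper}} x_{c(1)}\cdots x_{c(n)}q^{\operatorname{asc}(c)}$; it is symmetric if each coefficient of $q^k$ is a symmetric function. The ad-pattern of $P_n$ is $w_1\cdots w_{n-1}$ with $w_i=a$ if $\sigma_i<\sigma_{i+1}$ and $w_i=d$ otherwise. The ribbon diagram $RT(P_n)$: start with box $1$, and for $i=1,\dots,n-1$ place box $i+1$ immediately right of box $i$ if $w_i=a$ and immediately above box $i$ if $w_i=d$. A $\beta$ sub-ribbon is a set of consecutive boxes whose shape is the ribbon with row lengths $\beta$ (bottom to top); a $(1,1,3)$ shape is a vertical column of three boxes whose top box is the leftmost of a row of three boxes. 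*)

theory Defs
  imports "HOL-Combinatorics.Permutations" "HOL-Library.FuncSet"
begin

text \<open>Labeled path: positions 1..n, the vertex at position i carries label sigma i,
  where sigma permutes {1..n}. Vertices are identified with labels; the edges are
  {sigma i, sigma (i+1)} for 1 <= i < n.\<close>

datatype adletter = A | D

definition adpattern :: "(nat \<Rightarrow> nat) \<Rightarrow> nat \<Rightarrow> adletter list" where
  "adpattern \<sigma> n = map (\<lambda>i. if \<sigma> i < \<sigma> (Suc i) then A else D) [1..<n]"

definition proper_col :: "(nat \<Rightarrow> nat) \<Rightarrow> nat \<Rightarrow> (nat \<Rightarrow> nat) \<Rightarrow> bool" where
  "proper_col \<sigma> n c \<longleftrightarrow> (\<forall>i\<in>{1..<n}. c (\<sigma> i) \<noteq> c (\<sigma> (Suc i)))"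

definition asc :: "(nat \<Rightarrow> nat) \<Rightarrow> nat \<Rightarrow> (nat \<Rightarrow> nat) \<Rightarrow> nat" where
  "asc \<sigma> n c = card {i\<in>{1..<n}.
      c (min (\<sigma> i) (\<sigma> (Suc i))) < c (max (\<sigma> i) (\<sigma> (Suc i)))}"

text \<open>Coefficient of q^k x^alpha in X(P_n; x, q), where alpha j is the exponent
  of x_j (colors are positive integers).\<close>
definition cqf_coeff :: "(nat \<Rightarrow> nat) \<Rightarrow> nat \<Rightarrow> nat \<Rightarrow> (nat \<Rightarrow> nat) \<Rightarrow> nat" where
  "cqf_coeff \<sigma> n k \<alpha> = card {c \<in> {1..n} \<rightarrow>\<^sub>E {1..}.
      proper_col \<sigma> n c \<and> asc \<sigma> n c = k \<and>
      (\<forall>j. card {v\<in>{1..n}. c v = j} = \<alpha> j)}"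

definition cqf_symmetric :: "(nat \<Rightarrow> nat) \<Rightarrow> nat \<Rightarrow> bool" where
  "cqf_symmetric \<sigma> n \<longleftrightarrow>
     (\<forall>k \<alpha> \<pi>. \<pi> permutes {1..} \<longrightarrow> cqf_coeff \<sigma> n k (\<alpha> \<circ> \<pi>) = cqf_coeff \<sigma> n k \<alpha>)"

end

theory Submission
  imports Defs
begin

text \<open>In the top degree \<open>q\<^sup>n\<^sup>-\<^sup>1\<close> every edge is an ascent, so colours strictly increase
  along each edge towards the larger label. Then colour 1 can only sit on positions whose label
  is smaller than both neighbours' labels (valleys), so at most as many vertices as there are
  valleys get colour 1. A valley \<open>i\<close> whose two neighbours descend into it from further out (the
  factor \<open>(d) d a (a)\<close> of the ad-pattern, present under each hypothesis) allows such a
  colouring in which colour 2 is used once more than there are valleys: give \<open>i\<close> colour 1,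
  its neighbours and all other valleys colour 2, and every remaining vertex a large colour
  increasing with its label. Exchanging \<open>x\<^sub>1\<close> and \<open>x\<^sub>2\<close> therefore changes the top
  coefficient.\<close>

definition increases_along_edges :: "(nat \<Rightarrow> nat) \<Rightarrow> nat \<Rightarrow> (nat \<Rightarrow> nat) \<Rightarrow> bool" where
  "increases_along_edges \<sigma> n f \<longleftrightarrow>
     (\<forall>x\<in>{1..n}. \<forall>y\<in>{1..n}. (y = Suc x \<or> x = Suc y) \<longrightarrow> \<sigma> x < \<sigma> y \<longrightarrow> f x < f y)"

definition valleys :: "(nat \<Rightarrow> nat) \<Rightarrow> nat \<Rightarrow> nat set" where
  "valleys \<sigma> n = {p\<in>{1..n}. (1 < p \<longrightarrow> \<sigma> p < \<sigma> (p - 1)) \<and> (p < n \<longrightarrow> \<sigma> p < \<sigma> (Suc p))}"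

definition deep_valley :: "(nat \<Rightarrow> nat) \<Rightarrow> nat \<Rightarrow> nat \<Rightarrow> bool" where
  "deep_valley \<sigma> n i \<longleftrightarrow> 1 < i \<and> i < n \<and> \<sigma> i < \<sigma> (i - 1) \<and> \<sigma> i < \<sigma> (Suc i)
     \<and> (i = 2 \<or> \<sigma> (i - 1) < \<sigma> (i - 2)) \<and> (Suc i = n \<or> \<sigma> (Suc i) < \<sigma> (i + 2))"

lemma length_adpattern [simp]: "length (adpattern \<sigma> n) = n - 1"
  by (simp add: adpattern_def)

lemma adpattern_nth_A:
  "j < n - 1 \<Longrightarrow> adpattern \<sigma> n ! j = A \<Longrightarrow> \<sigma> (Suc j) < \<sigma> (Suc (Suc j))"
  by (simp add: adpattern_def split: if_splits)

lemma adpattern_nth_D: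
  assumes "inj \<sigma>" "j < n - 1" "adpattern \<sigma> n ! j = D"
  shows "\<sigma> (Suc (Suc j)) < \<sigma> (Suc j)"
proof -
  have "\<not> \<sigma> (Suc j) < \<sigma> (Suc (Suc j))"
    using assms(2,3) by (auto simp: adpattern_def split: if_splits)
  moreover have "\<sigma> (Suc j) \<noteq> \<sigma> (Suc (Suc j))" using injD[OF assms(1)] by fastforce
  ultimately show ?thesis by linarith
qed

lemma deep_valley_if_adpattern:
  assumes inj: "inj \<sigma>" and "(\<exists>u v. adpattern \<sigma> n = u @ [D, D, A, A] @ v)
         \<or> (\<exists>v. adpattern \<sigma> n = [D, A, A] @ v)
         \<or> (\<exists>u. adpattern \<sigma> n = u @ [D, D, A])"
  shows "\<exists>i. deep_valley \<sigma> n i"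
  using assms(2)
proof (elim disjE exE)
  fix u v assume w: "adpattern \<sigma> n = u @ [D, D, A, A] @ v"
  let ?k = "length u"
  have len: "?k + 4 \<le> n - 1" using arg_cong[OF w, of length] by simp
  have "\<sigma> (?k + 2) < \<sigma> (?k + 1)" using adpattern_nth_D[OF inj, of ?k n] w len by (simp add: nth_append)
  moreover have "\<sigma> (?k + 3) < \<sigma> (?k + 2)"
    using adpattern_nth_D[OF inj, of "?k + 1" n] w len by (simp add: nth_append numeral_eq_Suc)
  moreover have "\<sigma> (?k + 3) < \<sigma> (?k + 4)"
    using adpattern_nth_A[of "?k + 2" n] w len by (simp add: nth_append numeral_eq_Suc)
  moreover have "\<sigma> (?k + 4) < \<sigma> (?k + 5)"
    using adpattern_nth_A[of "?k + 3" n] w len by (simp add: nth_append numeral_eq_Suc)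
  ultimately have "deep_valley \<sigma> n (?k + 3)"
    using len by (auto simp: deep_valley_def numeral_eq_Suc)
  then show ?thesis ..
next
  fix v assume w: "adpattern \<sigma> n = [D, A, A] @ v"
  have len: "3 \<le> n - 1" using arg_cong[OF w, of length] by simp
  have "\<sigma> 2 < \<sigma> 1" using adpattern_nth_D[OF inj, of 0 n] w len by (simp add: numeral_eq_Suc)
  moreover have "\<sigma> 2 < \<sigma> 3" using adpattern_nth_A[of 1 n] w len by (simp add: numeral_eq_Suc)
  moreover have "\<sigma> 3 < \<sigma> 4" using adpattern_nth_A[of 2 n] w len by (simp add: numeral_eq_Suc)
  ultimately have "deep_valley \<sigma> n 2"
    using len by (auto simp: deep_valley_def numeral_eq_Suc)
  then show ?thesis ..
next
  fix u assume w: "adpattern \<sigma> n = u @ [D, D, A]"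
  let ?k = "length u"
  have len: "n = ?k + 4" using arg_cong[OF w, of length] by simp
  have "\<sigma> (?k + 2) < \<sigma> (?k + 1)" using adpattern_nth_D[OF inj, of ?k n] w len by (simp add: nth_append)
  moreover have "\<sigma> (?k + 3) < \<sigma> (?k + 2)"
    using adpattern_nth_D[OF inj, of "?k + 1" n] w len by (simp add: nth_append numeral_eq_Suc)
  moreover have "\<sigma> (?k + 3) < \<sigma> (?k + 4)"
    using adpattern_nth_A[of "?k + 2" n] w len by (simp add: nth_append numeral_eq_Suc)
  ultimately have "deep_valley \<sigma> n (?k + 3)"
    using len by (auto simp: deep_valley_def numeral_eq_Suc)
  then show ?thesis ..
qed

lemma increases_along_edges_iff:
  "increases_along_edges \<sigma> n f \<longleftrightarrow> (\<forall>p\<in>{1..<n}.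
     (\<sigma> p < \<sigma> (Suc p) \<longrightarrow> f p < f (Suc p)) \<and> (\<sigma> (Suc p) < \<sigma> p \<longrightarrow> f (Suc p) < f p))"
proof
  assume incr: "increases_along_edges \<sigma> n f"
  show "\<forall>p\<in>{1..<n}. (\<sigma> p < \<sigma> (Suc p) \<longrightarrow> f p < f (Suc p))
      \<and> (\<sigma> (Suc p) < \<sigma> p \<longrightarrow> f (Suc p) < f p)"
  proof (intro ballI conjI impI)
    fix p assume "p \<in> {1..<n}"
    then have p: "p \<in> {1..n}" "Suc p \<in> {1..n}" by auto
    show "f p < f (Suc p)" if "\<sigma> p < \<sigma> (Suc p)"
      using incr p that unfolding increases_along_edges_def by blast
    show "f (Suc p) < f p" if "\<sigma> (Suc p) < \<sigma> p"
      using incr p that unfolding increases_along_edges_def by blast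
  qed
next
  assume edges: "\<forall>p\<in>{1..<n}. (\<sigma> p < \<sigma> (Suc p) \<longrightarrow> f p < f (Suc p))
      \<and> (\<sigma> (Suc p) < \<sigma> p \<longrightarrow> f (Suc p) < f p)"
  show "increases_along_edges \<sigma> n f"
    unfolding increases_along_edges_def
  proof (intro ballI impI)
    fix x y assume "x \<in> {1..n}" "y \<in> {1..n}" "y = Suc x \<or> x = Suc y" "\<sigma> x < \<sigma> y"
    then show "f x < f y" using edges[rule_format, of x] edges[rule_format, of y] by auto
  qed
qed

lemma asc_eq_top_iff_increases_along_edges:
  assumes "inj \<sigma>"
  shows "asc \<sigma> n c = n - 1 \<longleftrightarrow> increases_along_edges \<sigma> n (c \<circ> \<sigma>)"
proof -
  let ?S = "{p\<in>{1..<n}. c (min (\<sigma> p) (\<sigma> (Suc p))) < c (max (\<sigma> p) (\<sigma> (Suc p)))}"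
  have "card ?S = card {1..<n} \<longleftrightarrow> ?S = {1..<n}"
    using card_subset_eq[OF finite_atLeastLessThan Collect_restrict] by auto
  then have "asc \<sigma> n c = n - 1 \<longleftrightarrow> ?S = {1..<n}"
    unfolding asc_def by simp
  also have "\<dots> \<longleftrightarrow> (\<forall>p\<in>{1..<n}. c (min (\<sigma> p) (\<sigma> (Suc p))) < c (max (\<sigma> p) (\<sigma> (Suc p))))"
    by blast
  also have "\<dots> \<longleftrightarrow> increases_along_edges \<sigma> n (c \<circ> \<sigma>)"
    unfolding increases_along_edges_iff
  proof (intro ball_cong refl)
    fix p
    have "\<sigma> p < \<sigma> (Suc p) \<or> \<sigma> (Suc p) < \<sigma> p"
      using injD[OF assms, of p "Suc p"] by linarith
    then show "c (min (\<sigma> p) (\<sigma> (Suc p))) < c (max (\<sigma> p) (\<sigma> (Suc p))) \<longleftrightarrow>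
        (\<sigma> p < \<sigma> (Suc p) \<longrightarrow> (c \<circ> \<sigma>) p < (c \<circ> \<sigma>) (Suc p))
        \<and> (\<sigma> (Suc p) < \<sigma> p \<longrightarrow> (c \<circ> \<sigma>) (Suc p) < (c \<circ> \<sigma>) p)"
      by (auto simp: min_def max_def)
  qed
  finally show ?thesis .
qed

lemma proper_col_if_increases_along_edges:
  assumes "inj \<sigma>" "increases_along_edges \<sigma> n (c \<circ> \<sigma>)"
  shows "proper_col \<sigma> n c"
proof -
  have "\<sigma> p \<noteq> \<sigma> (Suc p)" for p using injD[OF assms(1)] by fastforce
  then show ?thesis
    using assms(2) unfolding proper_col_def increases_along_edges_iff
    by (metis comp_apply less_irrefl nat_neq_iff)
qed

lemma colour_one_only_on_valleys:
  assumes "inj \<sigma>" "increases_along_edges \<sigma> n f" "\<forall>p\<in>{1..n}. 1 \<le> f p"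
  shows "{p\<in>{1..n}. f p = 1} \<subseteq> valleys \<sigma> n"
proof
  fix p assume p: "p \<in> {p\<in>{1..n}. f p = 1}"
  have below: "\<sigma> p < \<sigma> q" if "q \<in> {1..n}" "q = Suc p \<or> p = Suc q" for q
  proof -
    have "\<not> \<sigma> q < \<sigma> p"
      using assms(2,3) p that unfolding increases_along_edges_def by fastforce
    moreover have "\<sigma> q \<noteq> \<sigma> p" using injD[OF assms(1)] that by fastforce
    ultimately show ?thesis by linarith
  qed
  have "\<sigma> p < \<sigma> (p - 1)" if "1 < p"
  proof -
    have "p - 1 \<in> {1..n}" "p = Suc (p - 1)" using p that by auto
    then show ?thesis using below by blast
  qed
  moreover have "\<sigma> p < \<sigma> (Suc p)" if "p < n"
    using below[of "Suc p"] p that by simp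
  ultimately show "p \<in> valleys \<sigma> n" using p unfolding valleys_def by blast
qed

lemma colour_two_exceeds_valleys:
  assumes "deep_valley \<sigma> n i"
  shows "\<exists>f. (\<forall>p. 1 \<le> f p) \<and> increases_along_edges \<sigma> n f
           \<and> card {p\<in>{1..n}. f p = 2} = card (valleys \<sigma> n) + 1"
proof -
  let ?V = "valleys \<sigma> n"
  define f where "f p = (if p = i then 1 else if p = i - 1 \<or> p = Suc i \<or> p \<in> ?V then 2
    else \<sigma> p + 3)" for p
  have i: "1 < i" "i < n" "\<sigma> i < \<sigma> (i - 1)" "\<sigma> i < \<sigma> (Suc i)"
    "i = 2 \<or> \<sigma> (i - 1) < \<sigma> (i - 2)" "Suc i = n \<or> \<sigma> (Suc i) < \<sigma> (i + 2)"
    using assms unfolding deep_valley_def by auto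
  have finV: "finite ?V" and iV: "i \<in> ?V" and neighbours_notin_V: "i - 1 \<notin> ?V" "Suc i \<notin> ?V"
    using i unfolding valleys_def by (auto simp: numeral_eq_Suc)
  have "increases_along_edges \<sigma> n f"
    unfolding increases_along_edges_def
  proof (intro ballI impI)
    fix x y assume xy: "x \<in> {1..n}" "y \<in> {1..n}" "y = Suc x \<or> x = Suc y" "\<sigma> x < \<sigma> y"
    have yV: "y \<notin> ?V" using xy unfolding valleys_def by auto
    show "f x < f y"
    proof (cases "y = i - 1 \<or> y = Suc i")
      case True
      \<comment> \<open>the outer neighbour of \<open>y\<close> has a larger label, so \<open>x\<close> must be the valley \<open>i\<close>\<close>
      with xy(3) have "x = i \<or> (y = i - 1 \<and> x = i - 2) \<or> (y = Suc i \<and> x = i + 2)"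
        using i(1) by auto
      then have "x = i" using xy i by (auto simp: numeral_eq_Suc)
      then show ?thesis using True iV yV unfolding f_def by auto
    next
      case False
      then show ?thesis using iV yV xy(4) unfolding f_def by auto
    qed
  qed
  moreover have "card {p\<in>{1..n}. f p = 2} = card ?V + 1"
  proof -
    have "{p\<in>{1..n}. f p = 2} = (?V - {i}) \<union> {i - 1, Suc i}"
      using i unfolding f_def valleys_def by auto
    moreover have "card ((?V - {i}) \<union> {i - 1, Suc i}) = card (?V - {i}) + 2"
      using finV neighbours_notin_V i(1) by (subst card_Un_disjoint) auto
    moreover have "card (?V - {i}) + 1 = card ?V"
      using card_Suc_Diff1[OF finV iV] by simp
    ultimately show ?thesis by simp
  qed
  moreover have "\<forall>p. 1 \<le> f p" unfolding f_def by simp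
  ultimately show ?thesis by blast
qed

lemma card_level_set_permutes:
  assumes "\<sigma> permutes S"
  shows "card {v\<in>S. P v} = card {p\<in>S. P (\<sigma> p)}"
proof -
  have "{v\<in>S. P v} = \<sigma> ` {p\<in>S. P (\<sigma> p)}"
    using permutes_image[OF assms] by (auto simp: image_iff)
  then show ?thesis
    using card_image[OF inj_on_subset[OF permutes_inj[OF assms] subset_UNIV]] by simp
qed

lemma cqf_coeff_pos:
  assumes "c \<in> {1..n} \<rightarrow>\<^sub>E {1..}" "proper_col \<sigma> n c" "asc \<sigma> n c = k"
  shows "0 < cqf_coeff \<sigma> n k (\<lambda>j. card {v\<in>{1..n}. c v = j})"
proof -
  let ?C = "{c' \<in> {1..n} \<rightarrow>\<^sub>E {1..}. proper_col \<sigma> n c' \<and> asc \<sigma> n c' = k \<and>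
      (\<forall>j. card {v\<in>{1..n}. c' v = j} = card {v\<in>{1..n}. c v = j})}"
  have "?C \<subseteq> {1..n} \<rightarrow>\<^sub>E c ` {1..n}"
  proof
    fix c' assume c': "c' \<in> ?C"
    have "c' v \<in> c ` {1..n}" if "v \<in> {1..n}" for v
    proof -
      have "card {u\<in>{1..n}. c u = c' v} = card {u\<in>{1..n}. c' u = c' v}" using c' by auto
      also have "\<dots> \<noteq> 0" using that by auto
      finally obtain u where "u \<in> {1..n}" "c u = c' v" by (metis (mono_tags, lifting) card.empty
            empty_Collect_eq)
      then show ?thesis by (metis rev_image_eqI)
    qed
    then show "c' \<in> {1..n} \<rightarrow>\<^sub>E c ` {1..n}" using c' by (auto simp: PiE_iff)
  qed
  then have "finite ?C" by (rule finite_subset) (intro finite_PiE; simp)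
  moreover have "c \<in> ?C" using assms by auto
  ultimately show ?thesis unfolding cqf_coeff_def by (auto simp: card_gt_0_iff)
qed

lemma cqf_coeff_top_pos:
  assumes perm: "\<sigma> permutes {1..n}" and "\<forall>p. 1 \<le> f p" "increases_along_edges \<sigma> n f"
  shows "0 < cqf_coeff \<sigma> n (n - 1) (\<lambda>j. card {p\<in>{1..n}. f p = j})"
proof -
  define c where "c = restrict (f \<circ> inv \<sigma>) {1..n}"
  have c\<sigma>: "c (\<sigma> p) = f p" if "p \<in> {1..n}" for p
    using that permutes_in_image[OF perm] permutes_inverses(2)[OF perm] by (simp add: c_def)
  have inj: "inj \<sigma>" using perm by (rule permutes_inj)
  have "increases_along_edges \<sigma> n (c \<circ> \<sigma>)"
    using assms(3) c\<sigma> unfolding increases_along_edges_def by simp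
  then have "proper_col \<sigma> n c" "asc \<sigma> n c = n - 1"
    using inj proper_col_if_increases_along_edges asc_eq_top_iff_increases_along_edges by blast+
  moreover have "c \<in> {1..n} \<rightarrow>\<^sub>E {1..}" using assms(2) by (simp add: c_def)
  moreover have "card {v\<in>{1..n}. c v = j} = card {p\<in>{1..n}. f p = j}" for j
  proof -
    have "card {v\<in>{1..n}. c v = j} = card {p\<in>{1..n}. c (\<sigma> p) = j}"
      by (rule card_level_set_permutes[OF perm])
    also have "\<dots> = card {p\<in>{1..n}. f p = j}"
      using c\<sigma> by (intro arg_cong[where f = card]) auto
    finally show ?thesis .
  qed
  ultimately show ?thesis using cqf_coeff_pos[of c n \<sigma> "n - 1"] by simp
qed

lemma cqf_coeff_top_eq_0:
  assumes perm: "\<sigma> permutes {1..n}" and "card (valleys \<sigma> n) < \<alpha> 1"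
  shows "cqf_coeff \<sigma> n (n - 1) \<alpha> = 0"
proof -
  have inj: "inj \<sigma>" using perm by (rule permutes_inj)
  have "card {v\<in>{1..n}. c v = 1} \<le> card (valleys \<sigma> n)"
    if "c \<in> {1..n} \<rightarrow>\<^sub>E {1..}" "asc \<sigma> n c = n - 1" for c
  proof -
    have "increases_along_edges \<sigma> n (c \<circ> \<sigma>)"
      using that(2) asc_eq_top_iff_increases_along_edges[OF inj] by blast
    moreover have "\<forall>p\<in>{1..n}. 1 \<le> (c \<circ> \<sigma>) p"
      using that(1) permutes_in_image[OF perm] by (auto simp: PiE_iff)
    ultimately have "{p\<in>{1..n}. (c \<circ> \<sigma>) p = 1} \<subseteq> valleys \<sigma> n"
      by (rule colour_one_only_on_valleys[OF inj])
    then have "card {p\<in>{1..n}. c (\<sigma> p) = 1} \<le> card (valleys \<sigma> n)"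
      by (intro card_mono) (simp_all add: valleys_def)
    moreover have "card {v\<in>{1..n}. c v = 1} = card {p\<in>{1..n}. c (\<sigma> p) = 1}"
      by (rule card_level_set_permutes[OF perm])
    ultimately show ?thesis by linarith
  qed
  note bound = this
  let ?C = "{c \<in> {1..n} \<rightarrow>\<^sub>E {1..}. proper_col \<sigma> n c \<and> asc \<sigma> n c = n - 1 \<and>
      (\<forall>j. card {v\<in>{1..n}. c v = j} = \<alpha> j)}"
  have "?C = {}"
  proof (rule equals0I)
    fix c assume "c \<in> ?C"
    then have "\<alpha> 1 \<le> card (valleys \<sigma> n)" using bound[of c] by simp
    with assms(2) show False by linarith
  qed
  then show ?thesis unfolding cqf_coeff_def by (simp only: card.empty)
qed

theorem proposition4p5:
  fixes \<sigma> :: "nat \<Rightarrow> nat" and n :: nat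
  assumes "\<sigma> permutes {1..n}"
    and "(\<exists>u v. adpattern \<sigma> n = u @ [D, D, A, A] @ v)
         \<or> (\<exists>v. adpattern \<sigma> n = [D, A, A] @ v)
         \<or> (\<exists>u. adpattern \<sigma> n = u @ [D, D, A])"
  shows "\<not> cqf_symmetric \<sigma> n"
proof
  assume sym: "cqf_symmetric \<sigma> n"
  have inj: "inj \<sigma>" using assms(1) by (rule permutes_inj)
  obtain i where "deep_valley \<sigma> n i" using deep_valley_if_adpattern[OF inj assms(2)] ..
  then obtain f where f: "\<forall>p. 1 \<le> f p" "increases_along_edges \<sigma> n f"
    and two: "card {p\<in>{1..n}. f p = 2} = card (valleys \<sigma> n) + 1"
    using colour_two_exceeds_valleys by blast
  define \<alpha> where "\<alpha> j = card {p\<in>{1..n}. f p = j}" for j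
  have "Transposition.transpose 1 2 permutes {1::nat..}" by (rule permutes_swap_id) auto
  then have "cqf_coeff \<sigma> n (n - 1) (\<alpha> \<circ> Transposition.transpose 1 2) = cqf_coeff \<sigma> n (n - 1) \<alpha>"
    using sym unfolding cqf_symmetric_def by blast
  moreover have "cqf_coeff \<sigma> n (n - 1) (\<alpha> \<circ> Transposition.transpose 1 2) = 0"
    using cqf_coeff_top_eq_0[OF assms(1)] two by (simp add: \<alpha>_def)
  moreover have "0 < cqf_coeff \<sigma> n (n - 1) \<alpha>"
    using cqf_coeff_top_pos[OF assms(1) f] by (simp add: \<alpha>_def[abs_def])
  ultimately show False by simp
qed

end
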